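(* Let $\mathbb{H}$ be a simple hypergraph of order $n$ with strong chromatic number $\chi'(\mathbb{H})=k'$. Then for all non-negative integers $h>k$, $$\lambda_{h,k}(\mathbb{H})\le k(n-k')+(k'-1)h.$$
   Context: A strong $t$-colouring of a hypergraph $\mathbb{H}=(V,E)$ is a partition $\{C_1,\dots,C_t\}$ of $V$ with $|C_i\cap e|\le 1$ for all $e\in E$ and all $i$; $\chi'(\mathbb{H})$ is the least such $t$. For non-negative integers $h>k$, an $L(h,k)$-colouring of $\mathbb{H}$ is a map $f:V\to\mathbb{Z}_{\ge 0}$ such that $|f(u)-f(v)|\ge h$ whenever $u\ne v$ lie in a common edge, and $|f(u)-f(v)|\ge k$ whenever there are edges $e_1\ni v$, $e_2\ni u$ with $(e_1\cap e_2)\setminus\{u,v\}\ne\emptyset$. The span is $\max f-\min f$; $\lambda_{h,k}(\mathbb{H})$ is the minimum span of an $L(h,k)$-colouring. A hypergraph is simple if no edge contains another and every edge has at least two vertices. *)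

theory Defs
  imports "HOL-Library.Disjoint_Sets"
begin

definition hypergraph :: "'a set \<Rightarrow> 'a set set \<Rightarrow> bool" where
  "hypergraph V E \<longleftrightarrow> (\<forall>e\<in>E. e \<subseteq> V)"

definition simple_hypergraph :: "'a set \<Rightarrow> 'a set set \<Rightarrow> bool" where
  "simple_hypergraph V E \<longleftrightarrow> hypergraph V E
     \<and> (\<forall>e1\<in>E. \<forall>e2\<in>E. e1 \<subseteq> e2 \<longrightarrow> e1 = e2)
     \<and> (\<forall>e\<in>E. 2 \<le> card e)"

definition strong_colouring :: "'a set \<Rightarrow> 'a set set \<Rightarrow> 'a set set \<Rightarrow> nat \<Rightarrow> bool" where
  "strong_colouring V E P t \<longleftrightarrow> partition_on V P \<and> finite P \<and> card P = t
     \<and> (\<forall>C\<in>P. \<forall>e\<in>E. card (C \<inter> e) \<le> 1)"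

definition strong_chromatic_number :: "'a set \<Rightarrow> 'a set set \<Rightarrow> nat" where
  "strong_chromatic_number V E = (LEAST t. \<exists>P. strong_colouring V E P t)"

definition Lhk_colouring :: "nat \<Rightarrow> nat \<Rightarrow> 'a set \<Rightarrow> 'a set set \<Rightarrow> ('a \<Rightarrow> nat) \<Rightarrow> bool" where
  "Lhk_colouring h k V E f \<longleftrightarrow>
     (\<forall>u\<in>V. \<forall>v\<in>V. u \<noteq> v \<longrightarrow>
        ((\<exists>e\<in>E. u \<in> e \<and> v \<in> e) \<longrightarrow> int h \<le> \<bar>int (f u) - int (f v)\<bar>)
      \<and> ((\<exists>e1\<in>E. \<exists>e2\<in>E. v \<in> e1 \<and> u \<in> e2 \<and> (e1 \<inter> e2) - {u, v} \<noteq> {})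
           \<longrightarrow> int k \<le> \<bar>int (f u) - int (f v)\<bar>))"

definition span :: "'a set \<Rightarrow> ('a \<Rightarrow> nat) \<Rightarrow> nat" where
  "span V f = Max (f ` V) - Min (f ` V)"

definition lambda_hk :: "nat \<Rightarrow> nat \<Rightarrow> 'a set \<Rightarrow> 'a set set \<Rightarrow> nat" where
  "lambda_hk h k V E = (LEAST s. \<exists>f. Lhk_colouring h k V E f \<and> span V f = s)"

end

theory Submission
  imports Defs "HOL-Library.Product_Lexorder"
begin

text \<open>Take a strong colouring with k' classes and list the vertices class after class. Giving
  the i-th vertex the label k i plus an extra jump of h - k for each class boundary passed
  separates any two vertices by at least k, and vertices of different classes by at least h.
  Vertices sharing an edge lie in different classes, so this is an L(h,k)-colouring, and its
  largest label is k (n - 1) + (h - k)(k' - 1) = k (n - k') + (k' - 1) h.\<close>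

lemma card_less_elements_mono:
  fixes key :: "'a \<Rightarrow> 'b::order"
  assumes "finite V" "u \<in> V" "key u < key v"
  shows "card {w\<in>V. key w < key u} < card {w\<in>V. key w < key v}"
  using assms by (intro psubset_card_mono) (auto dest: less_trans)

lemma card_less_elements_less_card:
  fixes key :: "'a \<Rightarrow> 'b::order"
  assumes "finite V" "v \<in> V"
  shows "card {w\<in>V. key w < key v} < card V"
  using assms by (intro psubset_card_mono) auto

lemma mult_add_le_mult_of_less:
  fixes a b m :: nat
  assumes "a < b"
  shows "m * a + m \<le> m * b"
  using mult_le_mono2[OF Suc_leI[OF assms], of m] by simp

lemma layered_labelling:
  fixes c :: "'a \<Rightarrow> nat"
  assumes "finite V" "k \<le> h"
  obtains f :: "'a \<Rightarrow> nat" where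
    "\<And>v. v \<in> V \<Longrightarrow> f v \<le> k * (card V - 1) + (h - k) * c v"
    "\<And>u v. u \<in> V \<Longrightarrow> v \<in> V \<Longrightarrow> u \<noteq> v \<Longrightarrow> f u + k \<le> f v \<or> f v + k \<le> f u"
    "\<And>u v. u \<in> V \<Longrightarrow> v \<in> V \<Longrightarrow> c u < c v \<Longrightarrow> f u + h \<le> f v"
proof -
  obtain r :: "'a \<Rightarrow> nat" where r: "inj_on r V"
    using finite_imp_inj_to_nat_seg[OF \<open>finite V\<close>] by blast
  define key where "key v = (c v, r v)" for v
  define rank where "rank v = card {w\<in>V. key w < key v}" for v
  define f where "f v = k * rank v + (h - k) * c v" for v
  have rank_mono: "rank u < rank v" if "u \<in> V" "key u < key v" for u v
    unfolding rank_def using \<open>finite V\<close> that by (rule card_less_elements_mono)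
  have step: "f u + k \<le> f v" if "u \<in> V" "key u < key v" for u v
  proof -
    have "rank u < rank v" "c u \<le> c v"
      using rank_mono[OF that] that(2) by (auto simp: key_def)
    then show ?thesis
      unfolding f_def using mult_add_le_mult_of_less[of "rank u" "rank v" k] mult_le_mono2[of "c u" "c v" "h - k"]
      by linarith
  qed
  show thesis
  proof
    fix v assume "v \<in> V"
    then have "rank v < card V"
      unfolding rank_def by (rule card_less_elements_less_card[OF \<open>finite V\<close>])
    then have "rank v \<le> card V - 1"
      by simp
    then show "f v \<le> k * (card V - 1) + (h - k) * c v"
      unfolding f_def by simp
  next
    fix u v assume "u \<in> V" "v \<in> V" "u \<noteq> v"
    then have "key u \<noteq> key v"
      using r by (auto simp: key_def inj_on_def)
    then show "f u + k \<le> f v \<or> f v + k \<le> f u"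
      using step \<open>u \<in> V\<close> \<open>v \<in> V\<close> by (meson neq_iff)
  next
    fix u v assume "u \<in> V" "v \<in> V" "c u < c v"
    then have "rank u < rank v"
      by (intro rank_mono) (simp_all add: key_def)
    with \<open>c u < c v\<close> have "k * rank u + k \<le> k * rank v" "(h - k) * c u + (h - k) \<le> (h - k) * c v"
      by (simp_all add: mult_add_le_mult_of_less)
    then show "f u + h \<le> f v"
      unfolding f_def using \<open>k \<le> h\<close> by linarith
  qed
qed

lemma strong_colouring_by_singletons:
  assumes "finite V"
  shows "strong_colouring V E ((\<lambda>v. {v}) ` V) (card V)"
proof -
  have "card ({v} \<inter> e) \<le> 1" for v and e :: "'a set"
    by (cases "v \<in> e") auto
  then show ?thesis
    using assms by (auto simp: strong_colouring_def partition_on_singletons card_image)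
qed

lemma strong_colouring_strong_chromatic_number:
  assumes "finite V"
  obtains P where "strong_colouring V E P (strong_chromatic_number V E)"
proof -
  have "\<exists>P. strong_colouring V E P (LEAST t. \<exists>P. strong_colouring V E P t)"
    by (rule LeastI_ex) (use strong_colouring_by_singletons[OF assms] in blast)
  then show thesis
    using that unfolding strong_chromatic_number_def by blast
qed

lemma partition_on_obtain_block:
  assumes "partition_on V P"
  obtains block :: "'a \<Rightarrow> 'a set"
  where "\<And>v. v \<in> V \<Longrightarrow> block v \<in> P" "\<And>v. v \<in> V \<Longrightarrow> v \<in> block v" "block ` V = P"
proof -
  have unique: "\<exists>!C. C \<in> P \<and> v \<in> C" if "v \<in> V" for v
    using that partition_onD1[OF assms] disjointD[OF partition_onD2[OF assms]] by blast
  define block where "block v = (THE C. C \<in> P \<and> v \<in> C)" for v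
  have block: "block v \<in> P" "v \<in> block v" if "v \<in> V" for v
    using theI'[OF unique[OF that]] by (auto simp: block_def)
  have block_eq: "block v = C" if "C \<in> P" "v \<in> C" for v C
  proof -
    have "v \<in> V"
      using that partition_onD1[OF assms] by blast
    then show ?thesis
      unfolding block_def by (rule the1_equality[OF unique]) (use that in blast)
  qed
  have "P \<subseteq> block ` V"
  proof
    fix C assume "C \<in> P"
    then obtain v where "v \<in> C"
      using partition_onD3[OF assms] by (metis all_not_in_conv)
    then show "C \<in> block ` V"
      using block_eq[OF \<open>C \<in> P\<close>] \<open>C \<in> P\<close> partition_onD1[OF assms] by blast
  qed
  with block show thesis
    using that by blast
qed

lemma strong_colouring_colour_function:
  assumes "strong_colouring V E P t" "finite V"
  obtains c :: "'a \<Rightarrow> nat" where "c ` V = {..<t}"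
    "\<And>e u v. e \<in> E \<Longrightarrow> u \<in> e \<Longrightarrow> v \<in> e \<Longrightarrow> u \<in> V \<Longrightarrow> v \<in> V \<Longrightarrow> u \<noteq> v \<Longrightarrow> c u \<noteq> c v"
proof -
  have P: "partition_on V P" "finite P" "card P = t" "\<And>C e. C \<in> P \<Longrightarrow> e \<in> E \<Longrightarrow> card (C \<inter> e) \<le> 1"
    using assms(1) by (auto simp: strong_colouring_def)
  obtain b where b: "bij_betw b P {..<t}"
    using ex_bij_betw_finite_nat[OF \<open>finite P\<close>] by (auto simp: P(3) atLeast0LessThan)
  obtain block where block: "\<And>v. v \<in> V \<Longrightarrow> block v \<in> P" "\<And>v. v \<in> V \<Longrightarrow> v \<in> block v"
    and block_image: "block ` V = P"
    using partition_on_obtain_block[OF P(1)] by blast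
  show thesis
  proof
    show "(b \<circ> block) ` V = {..<t}"
      using bij_betw_imp_surj_on[OF b] block_image by (metis image_comp)
  next
    fix e u v assume "e \<in> E" "u \<in> e" "v \<in> e" "u \<in> V" "v \<in> V" "u \<noteq> v"
    show "(b \<circ> block) u \<noteq> (b \<circ> block) v"
    proof
      assume "(b \<circ> block) u = (b \<circ> block) v"
      then have "block u = block v"
        using b block(1) \<open>u \<in> V\<close> \<open>v \<in> V\<close> by (auto simp: bij_betw_def inj_on_def)
      then have "{u, v} \<subseteq> block u \<inter> e"
        using block(2) \<open>u \<in> V\<close> \<open>v \<in> V\<close> \<open>u \<in> e\<close> \<open>v \<in> e\<close> by auto
      moreover have "finite (block u \<inter> e)"
        using block(1)[OF \<open>u \<in> V\<close>] partition_onD1[OF P(1)] \<open>finite V\<close>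
        by (meson Sup_upper finite_Int finite_subset)
      ultimately have "2 \<le> card (block u \<inter> e)"
        using \<open>u \<noteq> v\<close> by (metis card_2_iff card_mono)
      then show False
        using P(4)[OF block(1)[OF \<open>u \<in> V\<close>] \<open>e \<in> E\<close>] by simp
    qed
  qed
qed

lemma Lhk_colouring_of_separating_labelling:
  fixes f :: "'a \<Rightarrow> nat" and c :: "'a \<Rightarrow> nat"
  assumes "k \<le> h"
    and dist: "\<And>u v. u \<in> V \<Longrightarrow> v \<in> V \<Longrightarrow> u \<noteq> v \<Longrightarrow> f u + k \<le> f v \<or> f v + k \<le> f u"
    and colour_gap: "\<And>u v. u \<in> V \<Longrightarrow> v \<in> V \<Longrightarrow> c u < c v \<Longrightarrow> f u + h \<le> f v"
    and proper: "\<And>e u v. e \<in> E \<Longrightarrow> u \<in> e \<Longrightarrow> v \<in> e \<Longrightarrow> u \<in> V \<Longrightarrow> v \<in> V \<Longrightarrow> u \<noteq> v \<Longrightarrow> c u \<noteq> c v"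
  shows "Lhk_colouring h k V E f"
  unfolding Lhk_colouring_def
proof (intro ballI impI conjI)
  fix u v assume "u \<in> V" "v \<in> V" "u \<noteq> v"
  then show "int k \<le> \<bar>int (f u) - int (f v)\<bar>"
    using dist by fastforce
  assume "\<exists>e\<in>E. u \<in> e \<and> v \<in> e"
  then have "c u < c v \<or> c v < c u"
    using proper \<open>u \<in> V\<close> \<open>v \<in> V\<close> \<open>u \<noteq> v\<close> by (meson neq_iff)
  then show "int h \<le> \<bar>int (f u) - int (f v)\<bar>"
    using colour_gap \<open>u \<in> V\<close> \<open>v \<in> V\<close> by fastforce
qed

lemma span_le:
  assumes "finite V" "V \<noteq> {}" "\<And>v. v \<in> V \<Longrightarrow> f v \<le> B"
  shows "span V f \<le> B"
proof -
  have "Max (f ` V) \<le> B"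
    using assms by simp
  then show ?thesis
    unfolding span_def by linarith
qed

lemma lambda_hk_le_span:
  assumes "Lhk_colouring h k V E f"
  shows "lambda_hk h k V E \<le> span V f"
  unfolding lambda_hk_def using assms by (blast intro: Least_le)

lemma layered_bound_eq_chromatic_form:
  fixes n t h k :: nat
  assumes "1 \<le> t" "t \<le> n" "k \<le> h"
  shows "k * (n - 1) + (h - k) * (t - 1) = k * (n - t) + (t - 1) * h"
proof -
  have "k * (n - 1) = k * (n - t) + k * (t - 1)"
    using assms by (simp flip: distrib_left)
  moreover have "(h - k) * (t - 1) + k * (t - 1) = (t - 1) * h"
    using assms by (simp flip: distrib_right)
  ultimately show ?thesis
    by simp
qed

theorem theorem3p1:
  fixes V :: "'a set" and E :: "'a set set" and n k' h k :: nat
  assumes "finite V" and "V \<noteq> {}"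
    and "simple_hypergraph V E"
    and "card V = n"
    and "strong_chromatic_number V E = k'"
    and "k < h"
  shows "lambda_hk h k V E \<le> k * (n - k') + (k' - 1) * h"
proof -
  obtain P where "strong_colouring V E P k'"
    using strong_colouring_strong_chromatic_number[OF \<open>finite V\<close>] \<open>strong_chromatic_number V E = k'\<close> by metis
  then obtain c :: "'a \<Rightarrow> nat" where c: "c ` V = {..<k'}"
    and proper: "\<And>e u v. e \<in> E \<Longrightarrow> u \<in> e \<Longrightarrow> v \<in> e \<Longrightarrow> u \<in> V \<Longrightarrow> v \<in> V \<Longrightarrow> u \<noteq> v \<Longrightarrow> c u \<noteq> c v"
    using strong_colouring_colour_function \<open>finite V\<close> by metis
  have "k' \<le> n" "1 \<le> k'"
    using card_image_le[OF \<open>finite V\<close>, of c] c \<open>card V = n\<close> \<open>V \<noteq> {}\<close> by auto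
  obtain f where bound: "\<And>v. v \<in> V \<Longrightarrow> f v \<le> k * (card V - 1) + (h - k) * c v"
    and dist: "\<And>u v. u \<in> V \<Longrightarrow> v \<in> V \<Longrightarrow> u \<noteq> v \<Longrightarrow> f u + k \<le> f v \<or> f v + k \<le> f u"
    and gap: "\<And>u v. u \<in> V \<Longrightarrow> v \<in> V \<Longrightarrow> c u < c v \<Longrightarrow> f u + h \<le> f v"
    using layered_labelling[OF \<open>finite V\<close>] \<open>k < h\<close> by (metis less_imp_le)
  have "Lhk_colouring h k V E f"
    using less_imp_le[OF \<open>k < h\<close>] dist gap proper by (rule Lhk_colouring_of_separating_labelling)
  then have "lambda_hk h k V E \<le> span V f"
    by (rule lambda_hk_le_span)
  also have "\<dots> \<le> k * (n - 1) + (h - k) * (k' - 1)"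
  proof (rule span_le[OF \<open>finite V\<close> \<open>V \<noteq> {}\<close>])
    fix v assume "v \<in> V"
    then have "c v < k'"
      using c by blast
    then have "c v \<le> k' - 1"
      by simp
    show "f v \<le> k * (n - 1) + (h - k) * (k' - 1)"
      using bound[OF \<open>v \<in> V\<close>] mult_le_mono2[OF \<open>c v \<le> k' - 1\<close>, of "h - k"] unfolding \<open>card V = n\<close> by linarith
  qed
  also have "\<dots> = k * (n - k') + (k' - 1) * h"
    using layered_bound_eq_chromatic_form \<open>1 \<le> k'\<close> \<open>k' \<le> n\<close> \<open>k < h\<close> by simp
  finally show ?thesis .
qed

end
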